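(* Let $X$ be a continuum, let $n\geq 2$ be an integer, and let $f:X\to X$ be a map. Consider the statements: (1) $f$ is sensitive; (2) $F_n(f)$ is sensitive; (3) $SF_n(f)$ is sensitive. Then (3) implies (2), and (2) implies (1).
   Context: A continuum is a nonempty compact connected metric space $(X,d)$. For $n\in\mathbb{N}$, $F_n(X)$ is the set of nonempty subsets of $X$ with at most $n$ points, with the Hausdorff metric $d_H$; $F_1(X)=\{\{x\}:x\in X\}$. For $f:X\to X$, $F_n(f):F_n(X)\to F_n(X)$ is $F_n(f)(A)=f(A)$. For $n\geq 2$, $SF_n(X)$ is the quotient space $F_n(X)/F_1(X)$ (collapsing $F_1(X)$ to a point), $q:F_n(X)\to SF_n(X)$ the quotient map and $F_X=q(F_1(X))$. The induced map $SF_n(f):SF_n(X)\to SF_n(X)$ is $SF_n(f)(\chi)=q(F_n(f)(q^{-1}(\chi)))$ if $\chi\neq F_X$ and $SF_n(f)(F_X)=F_X$. $SF_n(X)$ carries the metric $\rho(\chi_1,\chi_2)=\mathcal{H}^2(F_1(X)\cup q^{-1}(\chi_1),F_1(X)\cup q^{-1}(\chi_2))$, where $\mathcal{H}^2$ is the Hausdorff metric on closed subsets of $F_n(X)$ induced by $d_H$. A map $g$ on a metric space $(Z,D)$ is sensitive if there is $\delta>0$ such that for every nonempty open $U\subseteq Z$ there exist $x,y\in U$ and $m\in\mathbb{N}$ with $D(g^m(x),g^m(y))>\delta$ (with $D=d,d_H,\rho$ for $f,F_n(f),SF_n(f)$ respectively). *)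

theory Defs
  imports "HOL-Analysis.Analysis"
begin

definition hausdorff_gen :: "('b \<Rightarrow> 'b \<Rightarrow> real) \<Rightarrow> 'b set \<Rightarrow> 'b set \<Rightarrow> real" where
  "hausdorff_gen D A B =
     max (SUP a\<in>A. INF b\<in>B. D a b) (SUP b\<in>B. INF a\<in>A. D a b)"

definition dH :: "'a::metric_space set \<Rightarrow> 'a set \<Rightarrow> real" where
  "dH = hausdorff_gen dist"

definition continuum :: "'a::metric_space set \<Rightarrow> bool" where
  "continuum X \<longleftrightarrow> X \<noteq> {} \<and> compact X \<and> connected X"

definition Fn :: "nat \<Rightarrow> 'a set \<Rightarrow> 'a set set" where
  "Fn n X = {A. A \<subseteq> X \<and> A \<noteq> {} \<and> finite A \<and> card A \<le> n}"

definition F1 :: "'a set \<Rightarrow> 'a set set" where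
  "F1 X = {{x} | x. x \<in> X}"

definition Fn_map :: "('a \<Rightarrow> 'a) \<Rightarrow> 'a set \<Rightarrow> 'a set" where
  "Fn_map f A = f ` A"

text \<open>Quotient map q : F_n(X) \<rightarrow> SF_n(X) = F_n(X)/F_1(X). A point of the quotient
  is represented by its fibre (equivalence class): F_1(X) itself (the point F_X),
  or a singleton {A} for A \<notin> F_1(X).\<close>
definition qmap :: "'a set \<Rightarrow> 'a set \<Rightarrow> 'a set set" where
  "qmap X A = (if A \<in> F1 X then F1 X else {A})"

definition SFn :: "nat \<Rightarrow> 'a set \<Rightarrow> 'a set set set" where
  "SFn n X = qmap X ` Fn n X"

definition FX :: "'a set \<Rightarrow> 'a set set" where
  "FX X = F1 X"

text \<open>Induced map SF_n(f); since points are represented by their fibres,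
  q^{-1}(chi) = chi.\<close>
definition SFn_map :: "'a set \<Rightarrow> ('a \<Rightarrow> 'a) \<Rightarrow> 'a set set \<Rightarrow> 'a set set" where
  "SFn_map X f chi =
     (if chi = FX X then FX X else qmap X (Fn_map f (the_elem chi)))"

definition rho :: "'a::metric_space set \<Rightarrow> 'a set set \<Rightarrow> 'a set set \<Rightarrow> real" where
  "rho X chi1 chi2 = hausdorff_gen dH (F1 X \<union> chi1) (F1 X \<union> chi2)"

definition open_in_metric :: "'b set \<Rightarrow> ('b \<Rightarrow> 'b \<Rightarrow> real) \<Rightarrow> 'b set \<Rightarrow> bool" where
  "open_in_metric Z D U \<longleftrightarrow> U \<subseteq> Z \<and> (\<forall>x\<in>U. \<exists>e>0. \<forall>y\<in>Z. D x y < e \<longrightarrow> y \<in> U)"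

definition sensitive :: "'b set \<Rightarrow> ('b \<Rightarrow> 'b \<Rightarrow> real) \<Rightarrow> ('b \<Rightarrow> 'b) \<Rightarrow> bool" where
  "sensitive Z D g \<longleftrightarrow>
     (\<exists>\<delta>>0. \<forall>U. open_in_metric Z D U \<and> U \<noteq> {} \<longrightarrow>
        (\<exists>x\<in>U. \<exists>y\<in>U. \<exists>m\<ge>1. D ((g ^^ m) x) ((g ^^ m) y) > \<delta>))"

end

theory Submission
  imports Defs
begin

text \<open>Both implications transfer sensitivity from one space to another: for every nonempty
  open set U of the target one finds a nonempty open set V of the source such that any two
  orbits starting in V are, at each time, no farther apart than some two orbits starting in U.
  For \<open>F\<^sub>n(f) \<Rightarrow> f\<close> take \<open>V = F\<^sub>n(U)\<close>: the Hausdorff distance of two finite sets is at most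
  the largest distance between their points. For \<open>SF\<^sub>n(f) \<Rightarrow> F\<^sub>n(f)\<close> take
  \<open>V = q(U - F\<^sub>1(X))\<close>: q commutes with the dynamics and does not increase distances, and V is
  open because a small \<open>\<rho>\<close>-ball around the class of a non-singleton A only contains classes of
  sets that are \<open>d\<^sub>H\<close>-close to A. Since a nondegenerate continuum has no isolated points,
  \<open>U - F\<^sub>1(X)\<close> is nonempty.\<close>

lemma bdd_above_INF_image:
  fixes D :: "'a \<Rightarrow> 'b \<Rightarrow> real"
  assumes "B \<noteq> {}" and "\<And>a b. a \<in> A \<Longrightarrow> b \<in> B \<Longrightarrow> 0 \<le> D a b \<and> D a b \<le> K"
  shows "bdd_above ((\<lambda>a. INF b\<in>B. D a b) ` A)"
proof (rule bdd_aboveI2)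
  fix a assume "a \<in> A"
  obtain b where "b \<in> B" using assms(1) by blast
  have "bdd_below (D a ` B)" using assms(2) \<open>a \<in> A\<close> by (intro bdd_belowI2[of _ 0]) auto
  then show "(INF b\<in>B. D a b) \<le> K"
    using cINF_lower2[OF _ \<open>b \<in> B\<close>] assms(2) \<open>a \<in> A\<close> \<open>b \<in> B\<close> by blast
qed

lemma SUP_INF_le:
  fixes D :: "'a \<Rightarrow> 'b \<Rightarrow> real"
  assumes "A \<noteq> {}" and "\<And>a b. a \<in> A \<Longrightarrow> b \<in> B \<Longrightarrow> 0 \<le> D a b"
    and "\<And>a. a \<in> A \<Longrightarrow> \<exists>b\<in>B. D a b \<le> c"
  shows "(SUP a\<in>A. INF b\<in>B. D a b) \<le> c"
proof (rule cSUP_least[OF assms(1)])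
  fix a assume "a \<in> A"
  then obtain b where "b \<in> B" "D a b \<le> c" using assms(3) by blast
  moreover have "bdd_below (D a ` B)" using assms(2) \<open>a \<in> A\<close> by (intro bdd_belowI2[of _ 0]) auto
  ultimately show "(INF b\<in>B. D a b) \<le> c" by (rule cINF_lower2[rotated])
qed

lemma SUP_INF_nonneg:
  fixes D :: "'a \<Rightarrow> 'b \<Rightarrow> real"
  assumes "A \<noteq> {}" "B \<noteq> {}" and "\<And>a b. a \<in> A \<Longrightarrow> b \<in> B \<Longrightarrow> 0 \<le> D a b \<and> D a b \<le> K"
  shows "0 \<le> (SUP a\<in>A. INF b\<in>B. D a b)"
proof -
  obtain a where "a \<in> A" using assms(1) by blast
  have "0 \<le> (INF b\<in>B. D a b)" using assms(2,3) \<open>a \<in> A\<close> by (intro cINF_greatest) auto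
  moreover have "bdd_above ((\<lambda>a. INF b\<in>B. D a b) ` A)"
    by (rule bdd_above_INF_image) (use assms in auto)
  ultimately show ?thesis using \<open>a \<in> A\<close> by (blast intro: cSUP_upper2)
qed

lemma SUP_INF_less_imp:
  fixes D :: "'a \<Rightarrow> 'b \<Rightarrow> real"
  assumes "B \<noteq> {}" and "\<And>a b. a \<in> A \<Longrightarrow> b \<in> B \<Longrightarrow> 0 \<le> D a b \<and> D a b \<le> K"
    and "(SUP a\<in>A. INF b\<in>B. D a b) < e" and "a \<in> A"
  shows "\<exists>b\<in>B. D a b < e"
proof -
  have "bdd_above ((\<lambda>a. INF b\<in>B. D a b) ` A)"
    by (rule bdd_above_INF_image) (use assms in auto)
  then have "(INF b\<in>B. D a b) < e" using cSUP_upper[OF assms(4)] assms(3) by fastforce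
  moreover have "bdd_below (D a ` B)" using assms(2,4) by (intro bdd_belowI2[of _ 0]) auto
  ultimately show ?thesis using cINF_less_iff[OF assms(1)] by blast
qed

lemma hausdorff_gen_le:
  fixes D :: "'a \<Rightarrow> 'a \<Rightarrow> real"
  assumes "A \<noteq> {}" "B \<noteq> {}" and "\<And>a b. a \<in> A \<Longrightarrow> b \<in> B \<Longrightarrow> 0 \<le> D a b"
    and "\<And>a. a \<in> A \<Longrightarrow> \<exists>b\<in>B. D a b \<le> c" and "\<And>b. b \<in> B \<Longrightarrow> \<exists>a\<in>A. D a b \<le> c"
  shows "hausdorff_gen D A B \<le> c"
proof -
  have "(SUP a\<in>A. INF b\<in>B. D a b) \<le> c" by (rule SUP_INF_le) (use assms in auto)
  moreover have "(SUP b\<in>B. INF a\<in>A. D a b) \<le> c" by (rule SUP_INF_le) (use assms in auto)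
  ultimately show ?thesis unfolding hausdorff_gen_def by simp
qed

text \<open>Unlike hausdorff_gen_le, the next two lemmas need an upper bound K: the
  supremum of an unbounded set of reals is unspecified.\<close>

lemma hausdorff_gen_nonneg:
  fixes D :: "'a \<Rightarrow> 'a \<Rightarrow> real"
  assumes "A \<noteq> {}" "B \<noteq> {}" and "\<And>a b. a \<in> A \<Longrightarrow> b \<in> B \<Longrightarrow> 0 \<le> D a b \<and> D a b \<le> K"
  shows "0 \<le> hausdorff_gen D A B"
proof -
  have "0 \<le> (SUP a\<in>A. INF b\<in>B. D a b)" by (rule SUP_INF_nonneg) (use assms in auto)
  then show ?thesis unfolding hausdorff_gen_def by simp
qed

lemma hausdorff_gen_less_imp:
  fixes D :: "'a \<Rightarrow> 'a \<Rightarrow> real"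
  assumes "A \<noteq> {}" "B \<noteq> {}" and "\<And>a b. a \<in> A \<Longrightarrow> b \<in> B \<Longrightarrow> 0 \<le> D a b \<and> D a b \<le> K"
    and "hausdorff_gen D A B < e"
  shows "a \<in> A \<Longrightarrow> \<exists>b\<in>B. D a b < e" and "b \<in> B \<Longrightarrow> \<exists>a\<in>A. D a b < e"
proof -
  show "\<exists>b\<in>B. D a b < e" if "a \<in> A"
    by (rule SUP_INF_less_imp) (use assms that in \<open>auto simp: hausdorff_gen_def\<close>)
  show "\<exists>a\<in>A. D a b < e" if "b \<in> B"
    by (rule SUP_INF_less_imp[where D = "\<lambda>b a. D a b"]) (use assms that in \<open>auto simp: hausdorff_gen_def\<close>)
qed

lemma dH_le:
  fixes C :: "'a::metric_space set"
  assumes "C \<noteq> {}" "D \<noteq> {}"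
    and "\<And>c. c \<in> C \<Longrightarrow> \<exists>d\<in>D. dist c d \<le> r" and "\<And>d. d \<in> D \<Longrightarrow> \<exists>c\<in>C. dist c d \<le> r"
  shows "dH C D \<le> r"
  unfolding dH_def by (rule hausdorff_gen_le) (use assms in auto)

lemma dH_nonneg:
  fixes C :: "'a::metric_space set"
  assumes "C \<noteq> {}" "D \<noteq> {}" "bounded C" "bounded D"
  shows "0 \<le> dH C D"
  unfolding dH_def
  by (rule hausdorff_gen_nonneg[where K = "diameter (C \<union> D)"])
     (use assms in \<open>auto intro: diameter_bounded_bound\<close>)

lemma dH_less_imp:
  fixes C :: "'a::metric_space set"
  assumes "C \<noteq> {}" "D \<noteq> {}" "bounded C" "bounded D" and "dH C D < e"
  shows "c \<in> C \<Longrightarrow> \<exists>d\<in>D. dist c d < e" and "d \<in> D \<Longrightarrow> \<exists>c\<in>C. dist c d < e"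
proof -
  have bound: "0 \<le> dist c d \<and> dist c d \<le> diameter (C \<union> D)" if "c \<in> C" "d \<in> D" for c d
    using that assms(3,4) by (auto intro: diameter_bounded_bound)
  show "c \<in> C \<Longrightarrow> \<exists>d\<in>D. dist c d < e" "d \<in> D \<Longrightarrow> \<exists>c\<in>C. dist c d < e"
    using hausdorff_gen_less_imp[OF assms(1,2) bound] assms(5) by (auto simp: dH_def)
qed

lemma dH_le_diameter:
  fixes X :: "'a::metric_space set"
  assumes "bounded X" "C \<noteq> {}" "C \<subseteq> X" "D \<noteq> {}" "D \<subseteq> X"
  shows "dH C D \<le> diameter X"
  by (rule dH_le) (use assms in \<open>auto intro!: diameter_bounded_bound\<close>)

lemma finite_dH_le_dist:
  fixes C :: "'a::metric_space set"
  assumes "finite C" "finite D" "C \<noteq> {}" "D \<noteq> {}"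
  obtains c d where "c \<in> C" "d \<in> D" "dH C D \<le> dist c d"
proof -
  let ?M = "Max (case_prod dist ` (C \<times> D))"
  have fin: "finite (case_prod dist ` (C \<times> D))" using assms by simp
  have "?M \<in> case_prod dist ` (C \<times> D)" using assms by (intro Max_in fin) auto
  then obtain c d where cd: "c \<in> C" "d \<in> D" "?M = dist c d" by auto
  have "dist c' d' \<le> ?M" if "c' \<in> C" "d' \<in> D" for c' d'
    using that by (intro Max_ge fin) auto
  then have "dH C D \<le> ?M" using cd by (intro dH_le) (use assms in auto)
  then show ?thesis using that cd by simp
qed

lemma Fn_memD: "A \<in> Fn n X \<Longrightarrow> A \<noteq> {} \<and> A \<subseteq> X \<and> finite A"
  by (simp add: Fn_def)

lemma F1_memD: "E \<in> F1 X \<Longrightarrow> E \<noteq> {} \<and> E \<subseteq> X"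
  by (auto simp: F1_def)

lemma not_in_F1_imp_two_points:
  assumes "A \<noteq> {}" "A \<subseteq> X" "A \<notin> F1 X"
  obtains a1 a2 where "a1 \<in> A" "a2 \<in> A" "a1 \<noteq> a2"
proof -
  obtain a where "a \<in> A" using assms(1) by blast
  moreover have "A \<noteq> {a}" using assms(2,3) \<open>a \<in> A\<close> by (auto simp: F1_def)
  ultimately show ?thesis using that by blast
qed

lemma F1_Un_qmap: "F1 X \<union> qmap X C = insert C (F1 X)"
  by (auto simp: qmap_def)

lemma insert_F1_memD:
  assumes "C \<noteq> {}" "C \<subseteq> X" "E \<in> insert C (F1 X)"
  shows "E \<noteq> {} \<and> E \<subseteq> X"
  using assms F1_memD by blast

lemma rho_qmap_le_dH:
  fixes X :: "'a::metric_space set"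
  assumes "bounded X" "C \<noteq> {}" "C \<subseteq> X" "D \<noteq> {}" "D \<subseteq> X"
  shows "rho X (qmap X C) (qmap X D) \<le> dH C D"
proof -
  have nonneg: "0 \<le> dH E E'" if "E \<in> insert C (F1 X)" "E' \<in> insert D (F1 X)" for E E'
    using insert_F1_memD[OF assms(2,3) that(1)] insert_F1_memD[OF assms(4,5) that(2)]
    by (meson dH_nonneg bounded_subset assms(1))
  have self: "dH E E \<le> dH C D" if "E \<in> F1 X" for E
  proof -
    have "dH E E \<le> 0" using F1_memD[OF that] by (intro dH_le) auto
    also have "0 \<le> dH C D" by (rule nonneg) auto
    finally show ?thesis .
  qed
  show ?thesis
    unfolding rho_def F1_Un_qmap
  proof (rule hausdorff_gen_le)
    show "\<exists>E'\<in>insert D (F1 X). dH E E' \<le> dH C D" if "E \<in> insert C (F1 X)" for E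
      using that self by blast
    show "\<exists>E\<in>insert C (F1 X). dH E E' \<le> dH C D" if "E' \<in> insert D (F1 X)" for E'
      using that self by blast
  qed (use nonneg in auto)
qed

lemma rho_qmap_less_imp:
  fixes X :: "'a::metric_space set"
  assumes "bounded X" "A \<subseteq> X" "a1 \<in> A" "a2 \<in> A" "B \<noteq> {}" "B \<subseteq> X"
    and "rho X (qmap X A) (qmap X B) < e" and "e \<le> dist a1 a2 / 2"
  shows "B \<notin> F1 X \<and> dH A B < e"
proof -
  have "A \<noteq> {}" using assms(3) by blast
  have bound: "0 \<le> dH E E' \<and> dH E E' \<le> diameter X"
    if "E \<in> insert A (F1 X)" "E' \<in> insert B (F1 X)" for E E'
    using insert_F1_memD[OF \<open>A \<noteq> {}\<close> assms(2) that(1)] insert_F1_memD[OF assms(5,6) that(2)]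
    by (meson dH_nonneg dH_le_diameter bounded_subset assms(1))
  have "hausdorff_gen dH (insert A (F1 X)) (insert B (F1 X)) < e"
    using assms(7) by (simp add: rho_def F1_Un_qmap)
  then have "\<exists>E\<in>insert B (F1 X). dH A E < e"
    by (intro hausdorff_gen_less_imp(1)[where K = "diameter X"]) (use bound in auto)
  then obtain E where E: "E \<in> insert B (F1 X)" "dH A E < e" by blast
  have "E \<notin> F1 X"
  proof
    assume "E \<in> F1 X"
    then obtain x where x: "E = {x}" "x \<in> X" by (auto simp: F1_def)
    have "bounded A" using assms(1,2) by (rule bounded_subset)
    then have "\<exists>d\<in>E. dist a d < e" if "a \<in> A" for a
      using dH_less_imp(1)[OF \<open>A \<noteq> {}\<close> _ _ _ E(2) that] x by auto
    then have "dist a1 x < e" "dist a2 x < e" using assms(3,4) x(1) by auto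
    then show False using dist_triangle2[of a1 a2 x] assms(8) by linarith
  qed
  then show ?thesis using E by auto
qed

lemma open_in_metric_Fn_of_open:
  assumes "open_in_metric X dist U"
  shows "open_in_metric (Fn n X) dH (Fn n U)"
  unfolding open_in_metric_def
proof (intro conjI ballI)
  show "Fn n U \<subseteq> Fn n X" using assms by (auto simp: open_in_metric_def Fn_def)
  fix A assume A: "A \<in> Fn n U"
  then have A_props: "A \<noteq> {}" "A \<subseteq> U" "finite A" using Fn_memD by auto
  obtain r where r: "\<And>a. a \<in> A \<Longrightarrow> r a > 0 \<and> (\<forall>y\<in>X. dist a y < r a \<longrightarrow> y \<in> U)"
    using assms A_props(2) unfolding open_in_metric_def by (metis subsetD)
  define e where "e = Min (r ` A)"
  have e_pos: "e > 0" using r A_props by (simp add: e_def)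
  have e_le: "e \<le> r a" if "a \<in> A" for a using A_props(3) that by (simp add: e_def)
  have "B \<in> Fn n U" if B: "B \<in> Fn n X" "dH A B < e" for B
  proof -
    have "b \<in> U" if "b \<in> B" for b
    proof -
      obtain a where "a \<in> A" "dist a b < e"
        using dH_less_imp(2)[OF _ _ _ _ B(2) \<open>b \<in> B\<close>] A_props Fn_memD[OF B(1)] by blast
      then show ?thesis using r e_le Fn_memD[OF B(1)] \<open>b \<in> B\<close> by fastforce
    qed
    then show ?thesis using B(1) by (auto simp: Fn_def)
  qed
  then show "\<exists>e>0. \<forall>B\<in>Fn n X. dH A B < e \<longrightarrow> B \<in> Fn n U" using e_pos by blast
qed

lemma open_in_metric_qmap_image:
  fixes X :: "'a::metric_space set"
  assumes "bounded X" "open_in_metric (Fn n X) dH U"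
  shows "open_in_metric (SFn n X) (rho X) (qmap X ` (U - F1 X))"
  unfolding open_in_metric_def
proof (intro conjI ballI)
  have UF: "U \<subseteq> Fn n X" using assms(2) by (simp add: open_in_metric_def)
  then show "qmap X ` (U - F1 X) \<subseteq> SFn n X" by (auto simp: SFn_def)
  fix c assume "c \<in> qmap X ` (U - F1 X)"
  then obtain A where A: "A \<in> U" "A \<notin> F1 X" "c = qmap X A" by blast
  have AX: "A \<noteq> {}" "A \<subseteq> X" using Fn_memD A(1) UF by auto
  obtain a1 a2 where a12: "a1 \<in> A" "a2 \<in> A" "a1 \<noteq> a2"
    using not_in_F1_imp_two_points[OF AX A(2)] by blast
  obtain r where r: "r > 0" "\<forall>B\<in>Fn n X. dH A B < r \<longrightarrow> B \<in> U"
    using assms(2) A(1) by (auto simp: open_in_metric_def)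
  let ?e = "min r (dist a1 a2 / 2)"
  show "\<exists>e>0. \<forall>p\<in>SFn n X. rho X c p < e \<longrightarrow> p \<in> qmap X ` (U - F1 X)"
  proof (intro exI[of _ ?e] conjI ballI impI)
    show "?e > 0" using r a12 by simp
    fix p assume p: "p \<in> SFn n X" "rho X c p < ?e"
    then obtain B where B: "B \<in> Fn n X" "p = qmap X B" by (auto simp: SFn_def)
    have "B \<notin> F1 X \<and> dH A B < ?e"
      by (rule rho_qmap_less_imp[OF assms(1) AX(2) a12(1,2)]) (use Fn_memD[OF B(1)] A B p in auto)
    then show "p \<in> qmap X ` (U - F1 X)" using r B by auto
  qed
qed

lemma open_in_metric_Fn_not_subset_F1:
  fixes X :: "'a::metric_space set"
  assumes "connected X" "\<And>x. X \<noteq> {x}" "n \<ge> 2" "open_in_metric (Fn n X) dH U" "U \<noteq> {}"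
  shows "\<not> U \<subseteq> F1 X"
proof
  assume U_F1: "U \<subseteq> F1 X"
  then obtain x where x: "{x} \<in> U" "x \<in> X" using assms(5) by (auto simp: F1_def)
  obtain r where r: "r > 0" "\<forall>B\<in>Fn n X. dH {x} B < r \<longrightarrow> B \<in> U"
    using assms(4) x(1) by (auto simp: open_in_metric_def)
  have "x islimpt X" using connected_imp_perfect assms(1,2) x(2) by blast
  then obtain y where y: "y \<in> X" "y \<noteq> x" "dist y x < r" using r(1) by (auto simp: islimpt_approachable)
  have "dH {x} {x, y} \<le> dist x y" by (rule dH_le) auto
  moreover have "{x, y} \<in> Fn n X" using x y assms(3) by (auto simp: Fn_def card_insert_if)
  ultimately have "{x, y} \<in> U" using r(2) y(3) by (simp add: dist_commute)
  moreover have "{x, y} \<notin> F1 X" using y(2) by (auto simp: F1_def doubleton_eq_iff)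
  ultimately show False using U_F1 by blast
qed

lemma exists_open_SFn_subset_qmap_image:
  fixes X :: "'a::metric_space set"
  assumes "bounded X" "connected X" "n \<ge> 2" "open_in_metric (Fn n X) dH U" "U \<noteq> {}"
  obtains V where "open_in_metric (SFn n X) (rho X) V" "V \<noteq> {}" "V \<subseteq> qmap X ` U"
proof (cases "\<exists>x. X = {x}")
  case True
  then obtain x where "X = {x}" by blast
  then have "Fn n X \<subseteq> {X}" by (auto simp: Fn_def)
  moreover have "U \<subseteq> Fn n X" using assms(4) by (simp add: open_in_metric_def)
  ultimately have "U = Fn n X" using assms(5) by blast
  moreover have "open_in_metric (SFn n X) (rho X) (SFn n X)"
    by (auto simp: open_in_metric_def intro: exI[of _ 1])
  ultimately show ?thesis using that assms(5) by (simp add: SFn_def)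
next
  case False
  show ?thesis
  proof (rule that)
    show "open_in_metric (SFn n X) (rho X) (qmap X ` (U - F1 X))"
      using assms(1,4) by (rule open_in_metric_qmap_image)
    show "qmap X ` (U - F1 X) \<noteq> {}"
      using open_in_metric_Fn_not_subset_F1[OF assms(2) _ assms(3-5)] False by blast
  qed auto
qed

lemma funpow_Fn_map: "(Fn_map f ^^ m) A = (f ^^ m) ` A"
  by (induction m) (auto simp: Fn_map_def image_comp)

lemma funpow_image_subset: "f ` X \<subseteq> X \<Longrightarrow> (f ^^ m) ` X \<subseteq> X"
  by (induction m) (auto simp: image_subset_iff)

lemma SFn_map_qmap:
  assumes "A \<noteq> {}" "A \<subseteq> X" "f ` X \<subseteq> X"
  shows "SFn_map X f (qmap X A) = qmap X (f ` A)"
proof (cases "A \<in> F1 X")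
  case True
  then have "f ` A \<in> F1 X" using assms(3) by (auto simp: F1_def)
  then show ?thesis using True by (simp add: SFn_map_def qmap_def FX_def)
next
  case False
  then have "{A} \<noteq> F1 X" by auto
  then show ?thesis using False by (simp add: SFn_map_def qmap_def FX_def Fn_map_def)
qed

lemma funpow_SFn_map_qmap:
  assumes "A \<noteq> {}" "A \<subseteq> X" "f ` X \<subseteq> X"
  shows "(SFn_map X f ^^ m) (qmap X A) = qmap X ((f ^^ m) ` A)"
proof (induction m)
  case (Suc m)
  have "(f ^^ m) ` A \<subseteq> X" using funpow_image_subset[OF assms(3)] assms(2) by blast
  then show ?case using Suc assms(1,3) by (simp add: SFn_map_qmap image_comp)
qed simp

lemma rho_funpow_SFn_map_le:
  fixes X :: "'a::metric_space set"
  assumes "bounded X" "f ` X \<subseteq> X" "A \<in> Fn n X" "B \<in> Fn n X"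
  shows "rho X ((SFn_map X f ^^ m) (qmap X A)) ((SFn_map X f ^^ m) (qmap X B))
           \<le> dH ((Fn_map f ^^ m) A) ((Fn_map f ^^ m) B)"
proof -
  have "(f ^^ m) ` A \<subseteq> X" "(f ^^ m) ` B \<subseteq> X"
    using funpow_image_subset[OF assms(2)] Fn_memD[OF assms(3)] Fn_memD[OF assms(4)] by blast+
  then show ?thesis
    using rho_qmap_le_dH[OF assms(1)] Fn_memD[OF assms(3)] Fn_memD[OF assms(4)]
    by (simp add: funpow_SFn_map_qmap[OF _ _ assms(2)] funpow_Fn_map)
qed

lemma sensitive_transfer:
  assumes "sensitive Z D g"
    and "\<And>U. open_in_metric Z' D' U \<Longrightarrow> U \<noteq> {} \<Longrightarrow> \<exists>V. open_in_metric Z D V \<and> V \<noteq> {} \<and>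
           (\<forall>x\<in>V. \<forall>y\<in>V. \<forall>m. \<exists>x'\<in>U. \<exists>y'\<in>U. D ((g ^^ m) x) ((g ^^ m) y) \<le> D' ((g' ^^ m) x') ((g' ^^ m) y'))"
  shows "sensitive Z' D' g'"
proof -
  obtain \<delta> where "\<delta> > 0" and sens: "\<And>V. open_in_metric Z D V \<Longrightarrow> V \<noteq> {} \<Longrightarrow>
      \<exists>x\<in>V. \<exists>y\<in>V. \<exists>m\<ge>1. D ((g ^^ m) x) ((g ^^ m) y) > \<delta>"
    using assms(1) unfolding sensitive_def by blast
  have "\<exists>x'\<in>U. \<exists>y'\<in>U. \<exists>m\<ge>1. D' ((g' ^^ m) x') ((g' ^^ m) y') > \<delta>"
    if U: "open_in_metric Z' D' U" "U \<noteq> {}" for U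
  proof -
    obtain V where V: "open_in_metric Z D V" "V \<noteq> {}"
      and dominated: "\<forall>x\<in>V. \<forall>y\<in>V. \<forall>m. \<exists>x'\<in>U. \<exists>y'\<in>U. D ((g ^^ m) x) ((g ^^ m) y) \<le> D' ((g' ^^ m) x') ((g' ^^ m) y')"
      using assms(2)[OF U] by blast
    obtain x y m where "x \<in> V" "y \<in> V" "m \<ge> 1" "D ((g ^^ m) x) ((g ^^ m) y) > \<delta>"
      using sens[OF V] by blast
    then show ?thesis using dominated by (meson less_le_trans)
  qed
  then show ?thesis unfolding sensitive_def using \<open>\<delta> > 0\<close> by blast
qed

lemma sensitive_Fn_imp_sensitive:
  fixes X :: "'a::metric_space set"
  assumes "n \<ge> 1" "sensitive (Fn n X) dH (Fn_map f)"
  shows "sensitive X dist f"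
proof (rule sensitive_transfer[where Z' = X and D' = dist and g' = f, OF assms(2)], goal_cases)
  case (1 U)
  have dominated: "\<exists>a\<in>U. \<exists>b\<in>U. dH ((Fn_map f ^^ m) A) ((Fn_map f ^^ m) B) \<le> dist ((f ^^ m) a) ((f ^^ m) b)"
    if "A \<in> Fn n U" "B \<in> Fn n U" for A B m
  proof -
    have "finite ((f ^^ m) ` A)" "finite ((f ^^ m) ` B)" "(f ^^ m) ` A \<noteq> {}" "(f ^^ m) ` B \<noteq> {}"
      using Fn_memD[OF that(1)] Fn_memD[OF that(2)] by auto
    then obtain c d where "c \<in> (f ^^ m) ` A" "d \<in> (f ^^ m) ` B"
        "dH ((f ^^ m) ` A) ((f ^^ m) ` B) \<le> dist c d"
      by (rule finite_dH_le_dist)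
    moreover have "A \<subseteq> U" "B \<subseteq> U" using Fn_memD[OF that(1)] Fn_memD[OF that(2)] by auto
    ultimately show ?thesis by (auto simp: funpow_Fn_map)
  qed
  show ?case
  proof (intro exI[of _ "Fn n U"] conjI ballI allI)
    show "open_in_metric (Fn n X) dH (Fn n U)" using 1(1) by (rule open_in_metric_Fn_of_open)
    obtain x where "x \<in> U" using 1(2) by blast
    then have "{x} \<in> Fn n U" using assms(1) by (simp add: Fn_def)
    then show "Fn n U \<noteq> {}" by blast
  qed (rule dominated)
qed

lemma sensitive_SFn_imp_sensitive_Fn:
  fixes X :: "'a::metric_space set"
  assumes "bounded X" "connected X" "n \<ge> 2" "f ` X \<subseteq> X"
    and "sensitive (SFn n X) (rho X) (SFn_map X f)"
  shows "sensitive (Fn n X) dH (Fn_map f)"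
proof (rule sensitive_transfer[where Z' = "Fn n X" and D' = dH and g' = "Fn_map f", OF assms(5)],
    goal_cases)
  case (1 U)
  obtain V where V: "open_in_metric (SFn n X) (rho X) V" "V \<noteq> {}" "V \<subseteq> qmap X ` U"
    using exists_open_SFn_subset_qmap_image[OF assms(1-3) 1] by blast
  have "U \<subseteq> Fn n X" using 1(1) by (simp add: open_in_metric_def)
  show ?case
  proof (intro exI[of _ V] conjI ballI allI)
    fix x y m assume "x \<in> V" "y \<in> V"
    then obtain A B where "A \<in> U" "B \<in> U" "x = qmap X A" "y = qmap X B" using V(3) by blast
    with \<open>U \<subseteq> Fn n X\<close> show "\<exists>A\<in>U. \<exists>B\<in>U. rho X ((SFn_map X f ^^ m) x) ((SFn_map X f ^^ m) y)
                 \<le> dH ((Fn_map f ^^ m) A) ((Fn_map f ^^ m) B)"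
      using rho_funpow_SFn_map_le[OF assms(1,4)] by blast
  qed (fact V)+
qed

theorem theorem1:
  fixes X :: "'a::metric_space set" and f :: "'a \<Rightarrow> 'a" and n :: nat
  assumes "continuum X" and "n \<ge> 2"
    and "continuous_on X f" and "f ` X \<subseteq> X"
  shows "(sensitive (SFn n X) (rho X) (SFn_map X f) \<longrightarrow> sensitive (Fn n X) dH (Fn_map f))
       \<and> (sensitive (Fn n X) dH (Fn_map f) \<longrightarrow> sensitive X dist f)"
proof -
  have "bounded X" "connected X" using assms(1) by (auto simp: continuum_def compact_imp_bounded)
  then show ?thesis
    using sensitive_SFn_imp_sensitive_Fn[OF _ _ assms(2,4)] sensitive_Fn_imp_sensitive[of n X f] assms(2)
    by auto
qed

end
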